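(* For any $1\le d\le n$ and $\mathcal{F}$ being any one of the four classes (1) all, (2) homogeneous, (3) $d$-homogeneous, (4) degree at most $d$, we have \[ \mathrm{qBr}_n(\mathcal{F}^q_n)\le \mathrm{Br}_n(\mathcal{F}_n)\qquad\text{and}\qquad \mathrm{Br}_{3n}(\mathcal{F}_{3n})\le 3\,\mathrm{qBr}_n(\mathcal{F}^q_n). \]
   Context: Every $f:\{-1,1\}^m\to\mathbb{C}$ expands as $f=\sum_{S\subset[m]}\widehat f(S)\chi_S$ with $\chi_S(x)=\prod_{j\in S}x_j$. $f$ is of degree $d$ if $\widehat f(S)=0$ for $|S|>d$, $d$-homogeneous if $\widehat f(S)=0$ for $|S|\ne d$, and homogeneous if it is $d$-homogeneous for some $d$. The Boolean radius $\mathrm{Br}_m(f)$ is the positive real number $r$ with $\sum_{S\subset[m]}|\widehat f(S)|r^{|S|}=\|f\|_\infty$, and for a class $\mathcal{F}$ of functions $\mathrm{Br}_m(\mathcal{F})=\inf\{\mathrm{Br}_m(f):f\in\mathcal{F}\}$. The classes of functions on $\{-1,1\}^m$: $\mathcal{F}_m(\mathrm{all})$ all functions, $\mathcal{F}_m(\mathrm{hom})$ all homogeneous functions, $\mathcal{F}_m(=d)$ all $d$-homogeneous functions, $\mathcal{F}_m(\le d)$ all functions of degree at most $d$. Quantum setting: with Pauli matrices $\sigma_0=I_2$, $\sigma_1=\begin{pmatrix}0&1\\1&0\end{pmatrix}$, $\sigma_2=\begin{pmatrix}0&-i\\ i&0\end{pmatrix}$, $\sigma_3=\begin{pmatrix}1&0\\0&-1\end{pmatrix}$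 and $\sigma_{\mathbf{s}}=\sigma_{s_1}\otimes\cdots\otimes\sigma_{s_n}$ for $\mathbf{s}\in\{0,1,2,3\}^n$, every $A\in M_2(\mathbb{C})^{\otimes n}$ expands uniquely as $A=\sum_{\mathbf{s}}\widehat A_{\mathbf{s}}\sigma_{\mathbf{s}}$; $|\mathbf{s}|$ is the number of nonzero entries. Degree $d$, $d$-homogeneous and homogeneous are defined analogously using $|\mathbf{s}|$. The quantum Boolean radius $\mathrm{qBr}_n(A)$ is the positive real $r$ with $\sum_{\mathbf{s}}|\widehat A_{\mathbf{s}}|r^{|\mathbf{s}|}=\|A\|$ (operator norm), and $\mathrm{qBr}_n(\mathcal{F}')=\inf\{\mathrm{qBr}_n(A):A\in\mathcal{F}'\}$. For each class $\mathcal{F}_n$ above, $\mathcal{F}^q_n$ denotes the corresponding class of matrices in $M_2(\mathbb{C})^{\otimes n}$ (all, homogeneous, $d$-homogeneous, degree at most $d$). *)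

theory Defs
  imports Complex_Main "HOL-Library.FuncSet"
begin

definition cube :: "nat \<Rightarrow> (nat \<Rightarrow> real) set" where
  "cube m = {..<m} \<rightarrow>\<^sub>E {-1, 1}"

definition chi :: "nat set \<Rightarrow> (nat \<Rightarrow> real) \<Rightarrow> complex" where
  "chi S x = complex_of_real (\<Prod>j\<in>S. x j)"

definition fourier :: "nat \<Rightarrow> ((nat \<Rightarrow> real) \<Rightarrow> complex) \<Rightarrow> nat set \<Rightarrow> complex" where
  "fourier m f S = (\<Sum>x\<in>cube m. f x * chi S x) / 2 ^ m"

definition supnorm :: "nat \<Rightarrow> ((nat \<Rightarrow> real) \<Rightarrow> complex) \<Rightarrow> real" where
  "supnorm m f = Max ((\<lambda>x. cmod (f x)) ` cube m)"

definition br_sum :: "nat \<Rightarrow> ((nat \<Rightarrow> real) \<Rightarrow> complex) \<Rightarrow> real \<Rightarrow> real" where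
  "br_sum m f r = (\<Sum>S\<in>Pow {..<m}. cmod (fourier m f S) * r ^ card S)"

definition has_Br :: "nat \<Rightarrow> ((nat \<Rightarrow> real) \<Rightarrow> complex) \<Rightarrow> bool" where
  "has_Br m f = (\<exists>!r. r > 0 \<and> br_sum m f r = supnorm m f)"

definition Br :: "nat \<Rightarrow> ((nat \<Rightarrow> real) \<Rightarrow> complex) \<Rightarrow> real" where
  "Br m f = (THE r. r > 0 \<and> br_sum m f r = supnorm m f)"

definition Br_class :: "nat \<Rightarrow> ((nat \<Rightarrow> real) \<Rightarrow> complex) set \<Rightarrow> real" where
  "Br_class m F = Inf (Br m ` {f \<in> F. has_Br m f})"

definition deg_le :: "nat \<Rightarrow> nat \<Rightarrow> ((nat \<Rightarrow> real) \<Rightarrow> complex) \<Rightarrow> bool" where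
  "deg_le m d f = (\<forall>S\<in>Pow {..<m}. card S > d \<longrightarrow> fourier m f S = 0)"

definition hom_eq :: "nat \<Rightarrow> nat \<Rightarrow> ((nat \<Rightarrow> real) \<Rightarrow> complex) \<Rightarrow> bool" where
  "hom_eq m d f = (\<forall>S\<in>Pow {..<m}. card S \<noteq> d \<longrightarrow> fourier m f S = 0)"

datatype fclass = All | Hom | HomEq nat | DegLe nat

fun classical_class :: "nat \<Rightarrow> fclass \<Rightarrow> ((nat \<Rightarrow> real) \<Rightarrow> complex) set" where
  "classical_class m All = UNIV"
| "classical_class m Hom = {f. \<exists>d. hom_eq m d f}"
| "classical_class m (HomEq d) = {f. hom_eq m d f}"
| "classical_class m (DegLe d) = {f. deg_le m d f}"

text \<open>A matrix in M_2(C)^{tensor n} is a 2^n x 2^n complex matrix, represented by its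
  entries A i j for i, j < 2^n (the Kronecker ordering: tensor factor k corresponds to
  bit n-1-k of the index).\<close>
type_synonym cmat = "nat \<Rightarrow> nat \<Rightarrow> complex"

fun pauli :: "nat \<Rightarrow> cmat" where
  "pauli 0 i j = (if i = j then 1 else 0)"
| "pauli (Suc 0) i j = (if i \<noteq> j then 1 else 0)"
| "pauli (Suc (Suc 0)) i j = (if i = 0 \<and> j = 1 then - \<i> else if i = 1 \<and> j = 0 then \<i> else 0)"
| "pauli (Suc (Suc (Suc _))) i j = (if i = j then (if i = 0 then 1 else -1) else 0)"

definition bitk :: "nat \<Rightarrow> nat \<Rightarrow> nat \<Rightarrow> nat" where
  "bitk n k i = i div 2 ^ (n - 1 - k) mod 2"

definition pauli_tensor :: "nat \<Rightarrow> (nat \<Rightarrow> nat) \<Rightarrow> cmat" where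
  "pauli_tensor n s i j = (\<Prod>k<n. pauli (s k) (bitk n k i) (bitk n k j))"

definition pauli_idx :: "nat \<Rightarrow> (nat \<Rightarrow> nat) set" where
  "pauli_idx n = {..<n} \<rightarrow>\<^sub>E {0..3}"

definition weight :: "nat \<Rightarrow> (nat \<Rightarrow> nat) \<Rightarrow> nat" where
  "weight n s = card {k \<in> {..<n}. s k \<noteq> 0}"

definition pauli_coeff :: "nat \<Rightarrow> cmat \<Rightarrow> (nat \<Rightarrow> nat) \<Rightarrow> complex" where
  "pauli_coeff n A s =
     (\<Sum>i<2^n. \<Sum>j<2^n. pauli_tensor n s i j * A j i) / 2 ^ n"

definition vnorm :: "nat \<Rightarrow> (nat \<Rightarrow> complex) \<Rightarrow> real" where
  "vnorm N x = sqrt (\<Sum>i<N. (cmod (x i))\<^sup>2)"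

definition opnorm :: "nat \<Rightarrow> cmat \<Rightarrow> real" where
  "opnorm n A = Sup {vnorm (2^n) (\<lambda>i. \<Sum>j<2^n. A i j * x j) | x. vnorm (2^n) x \<le> 1}"

definition qbr_sum :: "nat \<Rightarrow> cmat \<Rightarrow> real \<Rightarrow> real" where
  "qbr_sum n A r = (\<Sum>s\<in>pauli_idx n. cmod (pauli_coeff n A s) * r ^ weight n s)"

definition has_qBr :: "nat \<Rightarrow> cmat \<Rightarrow> bool" where
  "has_qBr n A = (\<exists>!r. r > 0 \<and> qbr_sum n A r = opnorm n A)"

definition qBr :: "nat \<Rightarrow> cmat \<Rightarrow> real" where
  "qBr n A = (THE r. r > 0 \<and> qbr_sum n A r = opnorm n A)"

definition qBr_class :: "nat \<Rightarrow> cmat set \<Rightarrow> real" where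
  "qBr_class n F = Inf (qBr n ` {A \<in> F. has_qBr n A})"

definition qdeg_le :: "nat \<Rightarrow> nat \<Rightarrow> cmat \<Rightarrow> bool" where
  "qdeg_le n d A = (\<forall>s\<in>pauli_idx n. weight n s > d \<longrightarrow> pauli_coeff n A s = 0)"

definition qhom_eq :: "nat \<Rightarrow> nat \<Rightarrow> cmat \<Rightarrow> bool" where
  "qhom_eq n d A = (\<forall>s\<in>pauli_idx n. weight n s \<noteq> d \<longrightarrow> pauli_coeff n A s = 0)"

fun quantum_class :: "nat \<Rightarrow> fclass \<Rightarrow> cmat set" where
  "quantum_class n All = UNIV"
| "quantum_class n Hom = {A. \<exists>d. qhom_eq n d A}"
| "quantum_class n (HomEq d) = {A. qhom_eq n d A}"
| "quantum_class n (DegLe d) = {A. qdeg_le n d A}"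

end

theory Submission
  imports Defs "HOL-Analysis.L2_Norm"
begin

text \<open>
  Both inequalities come from maps between the two settings that preserve the four classes.

  A function \<open>f\<close> on \<open>{-1,1}\<^sup>n\<close> becomes the diagonal matrix with entries \<open>f(x)\<close>. Its Pauli
  coefficients are the Fourier coefficients of \<open>f\<close>, carried by the strings of \<open>\<sigma>\<^sub>0\<close> and \<open>\<sigma>\<^sub>3\<close>
  of the same weight, and its operator norm is \<open>\<parallel>f\<parallel>\<^sub>\<infinity>\<close>; so its quantum Boolean radius is
  \<open>Br(f)\<close>.

  A matrix \<open>A\<close> becomes the function \<open>g\<close> on \<open>{-1,1}\<^sup>3\<^sup>n\<close> whose Fourier coefficient at
  \<open>{3k + s\<^sub>k - 1 | s\<^sub>k \<noteq> 0}\<close> is the Pauli coefficient of \<open>A\<close> at \<open>s\<close> divided by \<open>3\<^bsup>|s|\<^esup>\<close>,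
  so that the coefficient sum of \<open>g\<close> at \<open>3r\<close> is that of \<open>A\<close> at \<open>r\<close>. Reading
  \<open>y\<^sub>k\<^sub>\<tau> = x\<^sub>3\<^sub>k\<^sub>+\<^sub>\<tau>\<^sub>-\<^sub>1\<close>, the value \<open>g(x)\<close> is \<open>2\<^sup>-\<^sup>n tr(A M)\<close> with
  \<open>M = \<Otimes>\<^sub>k (I + (y\<^sub>k\<^sub>1 \<sigma>\<^sub>1 + y\<^sub>k\<^sub>2 \<sigma>\<^sub>2 + y\<^sub>k\<^sub>3 \<sigma>\<^sub>3) / 3)\<close>. Each factor is \<open>2/3\<close> times the
  sum of the three projections onto eigenvectors of \<open>\<sigma>\<^sub>1, \<sigma>\<^sub>2, \<sigma>\<^sub>3\<close>, so \<open>g(x)\<close> is an average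
  of expectations \<open>\<langle>\<psi>, A \<psi>\<rangle>\<close> over product unit vectors and \<open>\<parallel>g\<parallel>\<^sub>\<infinity> \<le> \<parallel>A\<parallel>\<close>. As coefficient sums
  increase with the radius, \<open>Br(g) \<le> 3 qBr(A)\<close>.
\<close>

section \<open>Characters on the Boolean cube\<close>

lemma finite_cube [simp]: "finite (cube m)"
  unfolding cube_def by (simp add: finite_PiE)

lemma cube_nonempty [simp]: "cube m \<noteq> {}"
  unfolding cube_def by (simp add: PiE_eq_empty_iff)

lemma card_cube: "card (cube m) = 2 ^ m"
  unfolding cube_def by (simp add: card_PiE numeral_2_eq_2)

lemma cube_coord_cases: "x \<in> cube m \<Longrightarrow> j < m \<Longrightarrow> x j = -1 \<or> x j = 1"
  unfolding cube_def by (auto simp: PiE_iff)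

lemma sum_cube_prod:
  fixes F :: "nat \<Rightarrow> real \<Rightarrow> 'a::comm_semiring_1"
  shows "(\<Sum>x\<in>cube m. \<Prod>j<m. F j (x j)) = (\<Prod>j<m. F j (-1) + F j 1)"
proof -
  have "(\<Sum>x\<in>cube m. \<Prod>j<m. F j (x j)) = (\<Prod>j<m. \<Sum>y\<in>{-1,1}. F j y)"
    unfolding cube_def by (rule prod_sum_PiE[symmetric]) auto
  then show ?thesis by simp
qed

lemma chi_conv_prod:
  "S \<subseteq> {..<m} \<Longrightarrow> chi S x = (\<Prod>j<m. if j \<in> S then complex_of_real (x j) else 1)"
  unfolding chi_def by (simp add: prod.If_cases Int_absorb1 flip: of_real_prod)

lemma norm_chi: "x \<in> cube m \<Longrightarrow> S \<subseteq> {..<m} \<Longrightarrow> cmod (chi S x) = 1"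
  unfolding chi_def norm_of_real abs_prod
  by (rule prod.neutral) (use cube_coord_cases in fastforce)

lemma sum_chi_cube:
  assumes "S \<subseteq> {..<m}"
  shows "(\<Sum>x\<in>cube m. chi S x) = (if S = {} then 2 ^ m else 0)"
proof -
  have "(\<Sum>x\<in>cube m. chi S x) = (\<Prod>j<m. if j \<in> S then 0 else 2)"
    using assms by (simp add: chi_conv_prod sum_cube_prod[where F = "\<lambda>j y. if j \<in> S then of_real y else 1"]
        if_distrib[of "\<lambda>z. z + _"] cong: if_cong)
  also have "\<dots> = (if S = {} then 2 ^ m else 0)"
    using assms by (auto simp: prod_zero_iff)
  finally show ?thesis .
qed

lemma chi_mult_chi:
  assumes "x \<in> cube m" "S \<subseteq> {..<m}" "T \<subseteq> {..<m}"
  shows "chi S x * chi T x = chi (sym_diff S T) x"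
proof -
  have "x j * x j = 1" if "j < m" for j
    using cube_coord_cases[OF assms(1) that] by auto
  then have "chi S x * chi T x = (\<Prod>j<m. if j \<in> sym_diff S T then complex_of_real (x j) else 1)"
    using assms(2,3) by (auto simp: chi_conv_prod simp flip: prod.distrib of_real_mult intro!: prod.cong)
  also have "\<dots> = chi (sym_diff S T) x"
    using assms(2,3) by (subst chi_conv_prod[of _ m]) auto
  finally show ?thesis .
qed

lemma chi_orthogonal:
  assumes "S \<subseteq> {..<m}" "T \<subseteq> {..<m}"
  shows "(\<Sum>x\<in>cube m. chi S x * chi T x) = (if S = T then 2 ^ m else 0)"
proof -
  have "(\<Sum>x\<in>cube m. chi S x * chi T x) = (\<Sum>x\<in>cube m. chi (sym_diff S T) x)"
    using assms by (intro sum.cong) (auto simp: chi_mult_chi)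
  also have "\<dots> = (if sym_diff S T = {} then 2 ^ m else 0)"
    using assms by (intro sum_chi_cube) auto
  also have "sym_diff S T = {} \<longleftrightarrow> S = T" by blast
  finally show ?thesis .
qed

lemma fourier_sum_chi:
  assumes "finite I" "\<And>i. i \<in> I \<Longrightarrow> S i \<subseteq> {..<m}" "T \<subseteq> {..<m}"
  shows "fourier m (\<lambda>x. \<Sum>i\<in>I. c i * chi (S i) x) T = (\<Sum>i\<in>I. if S i = T then c i else 0)"
proof -
  have "fourier m (\<lambda>x. \<Sum>i\<in>I. c i * chi (S i) x) T
      = (\<Sum>i\<in>I. c i * (\<Sum>x\<in>cube m. chi (S i) x * chi T x)) / 2 ^ m"
    unfolding fourier_def by (simp add: sum_distrib_right sum_distrib_left mult.assoc sum.swap[of _ I])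
  also have "\<dots> = (\<Sum>i\<in>I. if S i = T then c i else 0)"
    using assms by (auto simp: chi_orthogonal sum_divide_distrib intro!: sum.cong)
  finally show ?thesis .
qed

lemma fourier_chi: "S \<subseteq> {..<m} \<Longrightarrow> T \<subseteq> {..<m} \<Longrightarrow> fourier m (chi T) S = (if S = T then 1 else 0)"
  unfolding fourier_def by (simp add: chi_orthogonal mult.commute)

section \<open>The Boolean radius\<close>

lemma norm_le_supnorm: "x \<in> cube m \<Longrightarrow> cmod (f x) \<le> supnorm m f"
  unfolding supnorm_def by (rule Max_ge) auto

lemma supnorm_le_iff: "supnorm m f \<le> c \<longleftrightarrow> (\<forall>x\<in>cube m. cmod (f x) \<le> c)"
  unfolding supnorm_def by (subst Max_le_iff) auto

lemma supnorm_attained: "\<exists>x\<in>cube m. cmod (f x) = supnorm m f"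
proof -
  have "supnorm m f \<in> (\<lambda>x. cmod (f x)) ` cube m"
    unfolding supnorm_def by (rule Max_in) auto
  then show ?thesis by auto
qed

lemma supnorm_nonneg: "0 \<le> supnorm m f"
  using supnorm_attained[of m f] norm_ge_zero by metis

lemma sum_norm_sq_diff_mean:
  fixes a :: "'a \<Rightarrow> complex"
  assumes "finite X"
  defines "c \<equiv> sum a X / of_nat (card X)"
  shows "(\<Sum>x\<in>X. (cmod (a x - c))\<^sup>2) = (\<Sum>x\<in>X. (cmod (a x))\<^sup>2) - card X * (cmod c)\<^sup>2"
proof -
  have sum_a: "sum a X = of_nat (card X) * c"
    using assms by (cases "X = {}") (auto simp: c_def)
  have "complex_of_real (\<Sum>x\<in>X. (cmod (a x - c))\<^sup>2) = (\<Sum>x\<in>X. (a x - c) * cnj (a x - c))"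
    by (simp only: of_real_sum complex_norm_square)
  also have "\<dots> = (\<Sum>x\<in>X. a x * cnj (a x)) - cnj c * sum a X - c * cnj (sum a X)
      + of_nat (card X) * (c * cnj c)"
    by (simp add: algebra_simps sum.distrib sum_subtractf sum_distrib_left)
  also have "\<dots> = (\<Sum>x\<in>X. a x * cnj (a x)) - of_nat (card X) * (c * cnj c)"
    by (simp add: sum_a algebra_simps)
  also have "\<dots> = complex_of_real ((\<Sum>x\<in>X. (cmod (a x))\<^sup>2) - card X * (cmod c)\<^sup>2)"
    by (simp only: of_real_diff of_real_sum of_real_mult of_real_of_nat_eq complex_norm_square)
  finally show ?thesis using of_real_eq_iff by blast
qed

text \<open>\<open>f\<close> is not constant, so its variance \<open>mean |f|\<^sup>2 - |mean f|\<^sup>2\<close> is positive.\<close>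
lemma norm_fourier_empty_less_supnorm:
  assumes "S \<subseteq> {..<m}" "S \<noteq> {}" "fourier m f S \<noteq> 0"
  shows "cmod (fourier m f {}) < supnorm m f"
proof -
  define N :: nat where "N = card (cube m)"
  define c where "c = fourier m f {}"
  have N: "N = 2 ^ m" by (simp add: N_def card_cube)
  have c: "c = sum f (cube m) / of_nat N"
    by (simp add: c_def fourier_def chi_def N)
  have "\<exists>x\<in>cube m. f x \<noteq> c"
  proof (rule ccontr)
    assume "\<not> ?thesis"
    then have "fourier m f S = c * (\<Sum>x\<in>cube m. chi S x) / 2 ^ m"
      by (simp add: fourier_def sum_distrib_left)
    then show False
      using assms by (simp add: sum_chi_cube)
  qed
  then obtain x where "x \<in> cube m" "f x \<noteq> c" ..
  then have "0 < (\<Sum>x\<in>cube m. (cmod (f x - c))\<^sup>2)"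
    by (intro sum_pos2[of _ x]) auto
  also have "\<dots> = (\<Sum>x\<in>cube m. (cmod (f x))\<^sup>2) - N * (cmod c)\<^sup>2"
    unfolding c N_def by (rule sum_norm_sq_diff_mean) simp
  also have "(\<Sum>x\<in>cube m. (cmod (f x))\<^sup>2) \<le> N * (supnorm m f)\<^sup>2"
    using sum_mono[of "cube m" "\<lambda>x. (cmod (f x))\<^sup>2" "\<lambda>_. (supnorm m f)\<^sup>2"]
    by (simp add: N_def power_mono norm_le_supnorm)
  finally have "(cmod c)\<^sup>2 < (supnorm m f)\<^sup>2"
    by (simp add: N)
  then show ?thesis
    unfolding c_def using supnorm_nonneg by (rule power_less_imp_less_base)
qed

lemma br_sum_0: "br_sum m f 0 = cmod (fourier m f {})"
proof -
  have "br_sum m f 0 = (\<Sum>S\<in>Pow {..<m}. if S = {} then cmod (fourier m f S) else 0)"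
    unfolding br_sum_def by (intro sum.cong) (auto simp: card_eq_0_iff finite_subset)
  then show ?thesis by simp
qed

lemma br_sum_strict_mono:
  assumes "S \<subseteq> {..<m}" "S \<noteq> {}" "fourier m f S \<noteq> 0" "0 \<le> r" "r < r'"
  shows "br_sum m f r < br_sum m f r'"
  unfolding br_sum_def
proof (rule sum_strict_mono_ex1)
  show "\<forall>T\<in>Pow {..<m}. cmod (fourier m f T) * r ^ card T \<le> cmod (fourier m f T) * r' ^ card T"
    using assms by (auto intro!: mult_left_mono power_mono)
  have "card S > 0"
    using assms by (meson card_gt_0_iff finite_lessThan finite_subset)
  then show "\<exists>T\<in>Pow {..<m}. cmod (fourier m f T) * r ^ card T < cmod (fourier m f T) * r' ^ card T"
    using assms by (intro bexI[of _ S]) (auto simp: power_strict_mono)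
qed simp

lemma has_Br_and_Br_le:
  assumes S: "S \<subseteq> {..<m}" "S \<noteq> {}" "fourier m f S \<noteq> 0"
    and R: "R > 0" "supnorm m f \<le> br_sum m f R"
  shows "has_Br m f \<and> Br m f \<le> R"
proof -
  have "continuous_on {0..R} (br_sum m f)"
    unfolding br_sum_def by (intro continuous_intros)
  moreover have below: "br_sum m f 0 < supnorm m f"
    using norm_fourier_empty_less_supnorm[OF S] by (simp add: br_sum_0)
  ultimately obtain r where r: "0 \<le> r" "r \<le> R" "br_sum m f r = supnorm m f"
    using IVT'[of "br_sum m f" 0 "supnorm m f" R] R by auto
  with below have "r \<noteq> 0" by auto
  with r have "r > 0" by simp
  have unique: "r' = r" if "r' > 0" "br_sum m f r' = supnorm m f" for r'
  proof (rule ccontr)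
    assume "r' \<noteq> r"
    then consider "r' < r" | "r < r'" by linarith
    then show False
      using br_sum_strict_mono[OF S, of r' r] br_sum_strict_mono[OF S, of r r'] that r by cases auto
  qed
  have "has_Br m f"
    unfolding has_Br_def using r \<open>r > 0\<close> unique by blast
  moreover have "Br m f = r"
    unfolding Br_def using r \<open>r > 0\<close> unique by blast
  ultimately show ?thesis using r by simp
qed

lemma Br_pos: "has_Br m f \<Longrightarrow> Br m f > 0"
  unfolding has_Br_def Br_def by (rule conjunct1[OF theI'])

lemma has_Br_chi:
  assumes "T \<subseteq> {..<m}" "T \<noteq> {}"
  shows "has_Br m (chi T)"
proof -
  have "br_sum m (chi T) 1 = (\<Sum>S\<in>Pow {..<m}. if S = T then 1 else 0)"
    unfolding br_sum_def using assms by (intro sum.cong) (auto simp: fourier_chi)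
  also have "\<dots> = 1" using assms by simp
  finally have "supnorm m (chi T) \<le> br_sum m (chi T) 1"
    using assms by (simp add: supnorm_le_iff norm_chi)
  then show ?thesis
    using has_Br_and_Br_le[of T m "chi T" 1] assms by (simp add: fourier_chi)
qed

lemma chi_in_classical_class:
  assumes "T \<subseteq> {..<m}" "card T = d" "K \<in> {All, Hom, HomEq d, DegLe d}"
  shows "chi T \<in> classical_class m K"
proof -
  have "hom_eq m d (chi T)" "deg_le m d (chi T)"
    using assms by (auto simp: hom_eq_def deg_le_def fourier_chi)
  then show ?thesis
    using assms(3) by auto
qed

section \<open>Bit strings and the operator norm\<close>

lemma bitk_less_2: "bitk n k i < 2"
  unfolding bitk_def by simp

lemma eq_if_bitk_eq:
  assumes "a < 2 ^ n" "b < 2 ^ n" "\<forall>k<n. bitk n k a = bitk n k b"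
  shows "a = b"
proof (rule bit_eqI)
  fix p
  show "bit a p \<longleftrightarrow> bit b p"
  proof (cases "p < n")
    case True
    then have "n - 1 - (n - 1 - p) = p" "n - 1 - p < n" by auto
    then have "a div 2 ^ p mod 2 = b div 2 ^ p mod 2"
      using assms(3) unfolding bitk_def by metis
    then show ?thesis by (simp add: bit_iff_odd odd_iff_mod_2_eq_one)
  next
    case False
    then have "2 ^ n \<le> (2::nat) ^ p" by simp
    then have "a div 2 ^ p = 0" "b div 2 ^ p = 0"
      using assms(1,2) by (simp_all only: div_less order_less_le_trans)
    then show ?thesis
      by (simp add: bit_iff_odd)
  qed
qed

lemma bij_betw_if_inj_on_card:
  assumes "inj_on f A" "f ` A \<subseteq> B" "finite B" "card A = card B"
  shows "bij_betw f A B"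
proof -
  have "card (f ` A) = card B"
    using assms(1,4) by (simp add: card_image)
  then have "f ` A = B"
    using assms(2,3) by (intro card_subset_eq)
  then show ?thesis
    using assms(1) by (simp add: bij_betw_def)
qed

definition index_bits :: "nat \<Rightarrow> nat \<Rightarrow> nat \<Rightarrow> nat" where
  "index_bits n i = (\<lambda>k\<in>{..<n}. bitk n k i)"

lemma bij_betw_index_bits: "bij_betw (index_bits n) {..<2 ^ n} ({..<n} \<rightarrow>\<^sub>E {0, 1})"
proof (rule bij_betw_if_inj_on_card)
  have "bitk n k a = bitk n k b" if "index_bits n a = index_bits n b" "k < n" for a b k
    using fun_cong[OF that(1), of k] that(2) by (simp add: index_bits_def)
  then show "inj_on (index_bits n) {..<2 ^ n}"
    by (intro inj_onI eq_if_bitk_eq) auto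
  have "bitk n k i \<in> {0, 1}" for k i
    using bitk_less_2[of n k i] by auto
  then show "index_bits n ` {..<2 ^ n} \<subseteq> {..<n} \<rightarrow>\<^sub>E {0, 1}"
    unfolding index_bits_def by (intro image_subsetI) (simp only: restrict_PiE_iff, blast)
qed (simp_all add: finite_PiE card_PiE numeral_2_eq_2)

lemma sum_index_prod_bits:
  fixes h :: "nat \<Rightarrow> nat \<Rightarrow> 'a::comm_semiring_1"
  shows "(\<Sum>i<2 ^ n. \<Prod>k<n. h k (bitk n k i)) = (\<Prod>k<n. h k 0 + h k 1)"
proof -
  have "(\<Sum>i<2 ^ n. \<Prod>k<n. h k (bitk n k i)) = (\<Sum>i<2 ^ n. \<Prod>k<n. h k (index_bits n i k))"
    by (simp add: index_bits_def)
  also have "\<dots> = (\<Sum>b\<in>{..<n} \<rightarrow>\<^sub>E {0, 1}. \<Prod>k<n. h k (b k))"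
    by (rule sum.reindex_bij_betw[OF bij_betw_index_bits])
  also have "\<dots> = (\<Prod>k<n. \<Sum>\<beta>\<in>{0, 1}. h k \<beta>)"
    by (rule prod_sum_PiE[symmetric]) auto
  finally show ?thesis by simp
qed

text \<open>Bit \<open>0\<close> of a basis index is read as the \<open>\<sigma>\<^sub>3\<close>-eigenvalue \<open>1\<close>, bit \<open>1\<close> as \<open>-1\<close>.\<close>
definition index_point :: "nat \<Rightarrow> nat \<Rightarrow> nat \<Rightarrow> real" where
  "index_point n i = (\<lambda>k\<in>{..<n}. if bitk n k i = 0 then 1 else -1)"

lemma bij_betw_index_point: "bij_betw (index_point n) {..<2 ^ n} (cube n)"
proof (rule bij_betw_if_inj_on_card)
  have "bitk n k a = bitk n k b" if "index_point n a = index_point n b" "k < n" for a b k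
    using fun_cong[OF that(1), of k] that(2) bitk_less_2[of n k a] bitk_less_2[of n k b]
    by (simp add: index_point_def less_2_cases_iff split: if_splits)
  then show "inj_on (index_point n) {..<2 ^ n}"
    by (intro inj_onI eq_if_bitk_eq) auto
  show "index_point n ` {..<2 ^ n} \<subseteq> cube n"
    unfolding index_point_def cube_def by (intro image_subsetI) (simp only: restrict_PiE_iff, simp)
qed (simp_all add: card_cube)

lemma index_point_in_cube: "i < 2 ^ n \<Longrightarrow> index_point n i \<in> cube n"
  using bij_betw_index_point by (auto simp: bij_betw_def)

lemma vnorm_eq_L2_set: "vnorm N x = L2_set (\<lambda>i. cmod (x i)) {..<N}"
  unfolding vnorm_def L2_set_def by simp

lemma vnorm_nonneg: "0 \<le> vnorm N x"
  unfolding vnorm_eq_L2_set by simp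

lemma norm_le_vnorm: "j < N \<Longrightarrow> cmod (x j) \<le> vnorm N x"
  unfolding vnorm_eq_L2_set by (rule member_le_L2_set) auto

lemma vnorm_single:
  assumes "j < N"
  shows "vnorm N (\<lambda>i. if i = j then c else 0) = cmod c"
proof -
  have "(\<Sum>i<N. (cmod (if i = j then c else 0))\<^sup>2) = (\<Sum>i<N. if i = j then (cmod c)\<^sup>2 else 0)"
    by (intro sum.cong) auto
  then show ?thesis
    using assms by (simp add: vnorm_def)
qed

lemma bdd_above_opnorm_set:
  "bdd_above {vnorm (2 ^ n) (\<lambda>i. \<Sum>j<2 ^ n. A i j * x j) | x. vnorm (2 ^ n) x \<le> 1}"
proof (rule bdd_aboveI, safe)
  fix x :: "nat \<Rightarrow> complex"
  assume x: "vnorm (2 ^ n) x \<le> 1"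
  have "vnorm (2 ^ n) (\<lambda>i. \<Sum>j<2 ^ n. A i j * x j) \<le> (\<Sum>i<2 ^ n. cmod (\<Sum>j<2 ^ n. A i j * x j))"
    unfolding vnorm_eq_L2_set by (rule L2_set_le_sum) auto
  also have "\<dots> \<le> (\<Sum>i<2 ^ n. \<Sum>j<2 ^ n. cmod (A i j))"
  proof (intro sum_mono order_trans[OF norm_sum])
    fix i j :: nat
    assume "j \<in> {..<2 ^ n}"
    then have "cmod (x j) \<le> 1"
      using norm_le_vnorm[of j "2 ^ n" x] x by simp
    then show "cmod (A i j * x j) \<le> cmod (A i j)"
      by (simp add: norm_mult mult_left_le)
  qed
  finally show "vnorm (2 ^ n) (\<lambda>i. \<Sum>j<2 ^ n. A i j * x j) \<le> (\<Sum>i<2 ^ n. \<Sum>j<2 ^ n. cmod (A i j))" .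
qed

lemma vnorm_mult_le_opnorm:
  "vnorm (2 ^ n) x \<le> 1 \<Longrightarrow> vnorm (2 ^ n) (\<lambda>i. \<Sum>j<2 ^ n. A i j * x j) \<le> opnorm n A"
  unfolding opnorm_def by (rule cSup_upper[OF _ bdd_above_opnorm_set]) auto

lemma opnorm_le:
  assumes "\<And>x. vnorm (2 ^ n) x \<le> 1 \<Longrightarrow> vnorm (2 ^ n) (\<lambda>i. \<Sum>j<2 ^ n. A i j * x j) \<le> c"
  shows "opnorm n A \<le> c"
proof -
  have "vnorm (2 ^ n) (\<lambda>_. 0) \<le> 1"
    by (simp add: vnorm_def)
  then show ?thesis
    unfolding opnorm_def using assms by (intro cSup_least) auto
qed

lemma norm_entry_le_opnorm:
  assumes "i < 2 ^ n" "j < 2 ^ n"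
  shows "cmod (A i j) \<le> opnorm n A"
proof -
  let ?e = "\<lambda>k. if k = j then 1 else 0 :: complex"
  have "(\<Sum>k<2 ^ n. A i' k * ?e k) = A i' j" for i'
  proof -
    have "(\<Sum>k<2 ^ n. A i' k * ?e k) = (\<Sum>k<2 ^ n. if k = j then A i' j else 0)"
      by (intro sum.cong) auto
    then show ?thesis using assms(2) by simp
  qed
  then have "cmod (A i j) \<le> vnorm (2 ^ n) (\<lambda>i'. \<Sum>k<2 ^ n. A i' k * ?e k)"
    using norm_le_vnorm[OF assms(1), of "\<lambda>i'. A i' j"] by simp
  also have "\<dots> \<le> opnorm n A"
    using vnorm_single[OF assms(2), of 1] by (intro vnorm_mult_le_opnorm) simp
  finally show ?thesis .
qed

lemma norm_quadratic_form_le_opnorm: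
  assumes "vnorm (2 ^ n) \<psi> = 1"
  shows "cmod (\<Sum>j<2 ^ n. cnj (\<psi> j) * (\<Sum>i<2 ^ n. A j i * \<psi> i)) \<le> opnorm n A"
proof -
  let ?A\<psi> = "\<lambda>j. \<Sum>i<2 ^ n. A j i * \<psi> i"
  have "cmod (\<Sum>j<2 ^ n. cnj (\<psi> j) * ?A\<psi> j) \<le> (\<Sum>j<2 ^ n. cmod (\<psi> j) * cmod (?A\<psi> j))"
    by (rule order_trans[OF norm_sum]) (simp add: norm_mult)
  also have "\<dots> \<le> L2_set (\<lambda>j. cmod (\<psi> j)) {..<2 ^ n} * L2_set (\<lambda>j. cmod (?A\<psi> j)) {..<2 ^ n}"
    using L2_set_mult_ineq[of "\<lambda>j. cmod (\<psi> j)" "\<lambda>j. cmod (?A\<psi> j)" "{..<2 ^ n}"] by simp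
  also have "\<dots> = vnorm (2 ^ n) ?A\<psi>"
    using assms by (simp add: vnorm_eq_L2_set)
  also have "\<dots> \<le> opnorm n A"
    using assms by (intro vnorm_mult_le_opnorm) simp
  finally show ?thesis .
qed

section \<open>Pauli expansions\<close>

lemma pauli_1 [simp]: "pauli 1 a b = (if a \<noteq> b then 1 else 0)"
  by (simp add: One_nat_def)

lemma pauli_2 [simp]: "pauli 2 a b = (if a = 0 \<and> b = 1 then - \<i> else if a = 1 \<and> b = 0 then \<i> else 0)"
  by (simp add: numeral_2_eq_2)

lemma pauli_3 [simp]: "pauli 3 a b = (if a = b then (if a = 0 then 1 else -1) else 0)"
  by (simp add: numeral_3_eq_3)

lemma finite_pauli_idx [simp]: "finite (pauli_idx n)"
  unfolding pauli_idx_def by (simp add: finite_PiE)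

lemma pauli_idx_cases:
  assumes "s \<in> pauli_idx n" "k < n"
  shows "s k \<in> {0, 1, 2, 3}"
proof -
  have "s k \<in> {0..3}"
    using assms unfolding pauli_idx_def by blast
  then show ?thesis by auto
qed

lemma pauli_idx_nonzero_cases: "s \<in> pauli_idx n \<Longrightarrow> k < n \<Longrightarrow> s k \<noteq> 0 \<Longrightarrow> s k \<in> {1, 2, 3}"
  using pauli_idx_cases by fastforce

lemma sum_pauli_coeff_mult:
  "(\<Sum>s\<in>S. pauli_coeff n A s * c s)
     = (\<Sum>i<2 ^ n. \<Sum>j<2 ^ n. A j i * (\<Sum>s\<in>S. pauli_tensor n s i j * c s)) / 2 ^ n"
proof -
  have "(\<Sum>s\<in>S. pauli_coeff n A s * c s)
      = (\<Sum>s\<in>S. \<Sum>i<2 ^ n. \<Sum>j<2 ^ n. A j i * (pauli_tensor n s i j * c s)) / 2 ^ n"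
    unfolding pauli_coeff_def sum_divide_distrib sum_distrib_right
    by (intro sum.cong refl) (simp add: algebra_simps)
  also have "(\<Sum>s\<in>S. \<Sum>i<2 ^ n. \<Sum>j<2 ^ n. A j i * (pauli_tensor n s i j * c s))
      = (\<Sum>i<2 ^ n. \<Sum>j<2 ^ n. \<Sum>s\<in>S. A j i * (pauli_tensor n s i j * c s))"
    by (subst sum.swap) (simp add: sum.swap[of _ S])
  finally show ?thesis
    by (simp add: sum_distrib_left)
qed

lemma sum_pauli_tensor_mult_prod:
  "(\<Sum>s\<in>pauli_idx n. pauli_tensor n s i j * (\<Prod>k<n. c k (s k)))
     = (\<Prod>k<n. \<Sum>t\<in>{0..3}. pauli t (bitk n k i) (bitk n k j) * c k t)"
  unfolding pauli_tensor_def pauli_idx_def prod.distrib[symmetric]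
  by (rule prod_sum_PiE[symmetric]) auto

lemma has_qBrD:
  assumes "has_qBr n A"
  shows "qBr n A > 0" "qbr_sum n A (qBr n A) = opnorm n A"
proof -
  have "qBr n A > 0 \<and> qbr_sum n A (qBr n A) = opnorm n A"
    unfolding qBr_def by (rule theI') (use assms in \<open>simp add: has_qBr_def\<close>)
  then show "qBr n A > 0" "qbr_sum n A (qBr n A) = opnorm n A" by simp_all
qed

lemma has_qBr_imp_nonscalar:
  assumes "has_qBr n A"
  shows "\<exists>s\<in>pauli_idx n. weight n s > 0 \<and> pauli_coeff n A s \<noteq> 0"
proof (rule ccontr)
  assume "\<not> ?thesis"
  then have "cmod (pauli_coeff n A s) * r ^ weight n s = cmod (pauli_coeff n A s) * 1 ^ weight n s"
    if "s \<in> pauli_idx n" for s r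
    using that by (cases "weight n s") auto
  then have independent_of_r: "qbr_sum n A r = qbr_sum n A 1" for r
    unfolding qbr_sum_def by (intro sum.cong) auto
  have "qbr_sum n A (qBr n A + 1) = opnorm n A"
    using has_qBrD(2)[OF assms] independent_of_r by metis
  then have "(THE r. r > 0 \<and> qbr_sum n A r = opnorm n A) = qBr n A + 1"
    using assms has_qBrD(1)[OF assms] unfolding has_qBr_def by (intro the1_equality) auto
  then show False
    unfolding qBr_def by simp
qed

lemma quantum_class_if_coeffs_above:
  assumes above: "\<And>s. s \<in> pauli_idx n \<Longrightarrow> pauli_coeff n A s \<noteq> 0 \<Longrightarrow>
      \<exists>S\<in>Pow {..<m}. card S = weight n s \<and> fourier m f S \<noteq> 0"
    and f: "f \<in> classical_class m K"
  shows "A \<in> quantum_class n K"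
proof -
  have transfer: "\<forall>s\<in>pauli_idx n. \<not> P (weight n s) \<longrightarrow> pauli_coeff n A s = 0"
    if "\<forall>S\<in>Pow {..<m}. \<not> P (card S) \<longrightarrow> fourier m f S = 0" for P
  proof (intro ballI impI)
    fix s assume "s \<in> pauli_idx n" "\<not> P (weight n s)"
    then show "pauli_coeff n A s = 0"
      using above[of s] that by (metis (no_types))
  qed
  have "qhom_eq n d A" if "hom_eq m d f" for d
    using transfer[of "\<lambda>k. k = d"] that unfolding hom_eq_def qhom_eq_def by simp
  moreover have "qdeg_le n d A" if "deg_le m d f" for d
    using transfer[of "\<lambda>k. k \<le> d"] that unfolding deg_le_def qdeg_le_def by (simp add: not_le)
  ultimately show ?thesis
    using f by (cases K) auto
qed

lemma classical_class_if_coeffs_above: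
  assumes above: "\<And>S. S \<in> Pow {..<m} \<Longrightarrow> fourier m f S \<noteq> 0 \<Longrightarrow>
      \<exists>s\<in>pauli_idx n. weight n s = card S \<and> pauli_coeff n A s \<noteq> 0"
    and A: "A \<in> quantum_class n K"
  shows "f \<in> classical_class m K"
proof -
  have transfer: "\<forall>S\<in>Pow {..<m}. \<not> P (card S) \<longrightarrow> fourier m f S = 0"
    if "\<forall>s\<in>pauli_idx n. \<not> P (weight n s) \<longrightarrow> pauli_coeff n A s = 0" for P
  proof (intro ballI impI)
    fix S assume "S \<in> Pow {..<m}" "\<not> P (card S)"
    then show "fourier m f S = 0"
      using above[of S] that by (metis (no_types))
  qed
  have "hom_eq m d f" if "qhom_eq n d A" for d
    using transfer[of "\<lambda>k. k = d"] that unfolding hom_eq_def qhom_eq_def by simp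
  moreover have "deg_le m d f" if "qdeg_le n d A" for d
    using transfer[of "\<lambda>k. k \<le> d"] that unfolding deg_le_def qdeg_le_def by (simp add: not_le)
  ultimately show ?thesis
    using A by (cases K) auto
qed

section \<open>Diagonal matrices\<close>

definition diag_mat :: "nat \<Rightarrow> ((nat \<Rightarrow> real) \<Rightarrow> complex) \<Rightarrow> cmat" where
  "diag_mat n f i j = (if i = j then f (index_point n i) else 0)"

lemma diag_mat_mult:
  assumes "i < 2 ^ n"
  shows "(\<Sum>j<2 ^ n. diag_mat n f i j * x j) = f (index_point n i) * x i"
proof -
  have "(\<Sum>j<2 ^ n. diag_mat n f i j * x j) = (\<Sum>j<2 ^ n. if j = i then f (index_point n i) * x i else 0)"
    by (intro sum.cong) (auto simp: diag_mat_def)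
  then show ?thesis using assms by simp
qed

lemma opnorm_diag_mat: "opnorm n (diag_mat n f) = supnorm n f"
proof (rule antisym)
  let ?M = "supnorm n f"
  show "opnorm n (diag_mat n f) \<le> ?M"
  proof (rule opnorm_le)
    fix x assume x: "vnorm (2 ^ n) x \<le> 1"
    have "(vnorm (2 ^ n) (\<lambda>i. \<Sum>j<2 ^ n. diag_mat n f i j * x j))\<^sup>2
        = (\<Sum>i<2 ^ n. (cmod (f (index_point n i)) * cmod (x i))\<^sup>2)"
      by (simp add: vnorm_def diag_mat_mult norm_mult sum_nonneg)
    also have "\<dots> \<le> (\<Sum>i<2 ^ n. ?M\<^sup>2 * (cmod (x i))\<^sup>2)"
      by (intro sum_mono) (simp add: power_mult_distrib mult_right_mono power_mono
          norm_le_supnorm index_point_in_cube)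
    also have "\<dots> = ?M\<^sup>2 * (vnorm (2 ^ n) x)\<^sup>2"
      by (simp add: vnorm_def sum_distrib_left sum_nonneg)
    also have "\<dots> \<le> ?M\<^sup>2"
      using x vnorm_nonneg[of "2 ^ n" x] by (simp add: mult_left_le power_le_one)
    finally show "vnorm (2 ^ n) (\<lambda>i. \<Sum>j<2 ^ n. diag_mat n f i j * x j) \<le> ?M"
      using supnorm_nonneg by (rule power2_le_imp_le)
  qed
  obtain x0 where x0: "x0 \<in> cube n" "cmod (f x0) = ?M"
    using supnorm_attained by blast
  then obtain i0 where i0: "i0 < 2 ^ n" "index_point n i0 = x0"
    using bij_betw_index_point[of n] by (force simp: bij_betw_def)
  then show "?M \<le> opnorm n (diag_mat n f)"
    using norm_entry_le_opnorm[OF i0(1) i0(1), of "diag_mat n f"] x0 by (simp add: diag_mat_def)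
qed

definition z_pauli :: "nat \<Rightarrow> nat set \<Rightarrow> nat \<Rightarrow> nat" where
  "z_pauli n S = (\<lambda>k\<in>{..<n}. if k \<in> S then 3 else 0)"

lemma z_pauli_in_pauli_idx: "z_pauli n S \<in> pauli_idx n"
  unfolding z_pauli_def pauli_idx_def by (simp add: restrict_PiE_iff)

lemma inj_on_z_pauli: "inj_on (z_pauli n) (Pow {..<n})"
proof (rule inj_onI)
  fix S T assume ST: "S \<in> Pow {..<n}" "T \<in> Pow {..<n}" and eq: "z_pauli n S = z_pauli n T"
  have "k \<in> S \<longleftrightarrow> k \<in> T" if "k < n" for k
    using fun_cong[OF eq, of k] that by (simp add: z_pauli_def split: if_splits)
  then show "S = T" using ST by blast
qed

lemma weight_z_pauli: "S \<subseteq> {..<n} \<Longrightarrow> weight n (z_pauli n S) = card S"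
  unfolding weight_def z_pauli_def by (rule arg_cong[where f = card]) auto

lemma pauli_tensor_z_pauli_diag:
  assumes "S \<subseteq> {..<n}"
  shows "pauli_tensor n (z_pauli n S) i i = chi S (index_point n i)"
  unfolding pauli_tensor_def chi_conv_prod[OF assms]
  by (intro prod.cong) (auto simp: z_pauli_def index_point_def)

lemma pauli_tensor_diag_eq_0:
  assumes s: "s \<in> pauli_idx n" "s \<notin> z_pauli n ` Pow {..<n}"
  shows "pauli_tensor n s i i = 0"
proof -
  have "\<exists>k<n. s k \<in> {1, 2}"
  proof (rule ccontr)
    assume "\<not> ?thesis"
    then have "s k \<in> {0, 3}" if "k < n" for k
      using that pauli_idx_cases[OF s(1) that] by blast
    moreover have "s \<in> extensional {..<n}"
      using s(1) by (simp add: pauli_idx_def PiE_def)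
    ultimately have "s = z_pauli n {k\<in>{..<n}. s k = 3}"
      by (force simp: z_pauli_def extensional_def)
    then show False using s(2) by blast
  qed
  then obtain k where k: "k < n" "s k \<in> {1, 2}" by blast
  then have "pauli (s k) (bitk n k i) (bitk n k i) = 0" by auto
  then show ?thesis
    unfolding pauli_tensor_def using k(1) by (intro prod_zero) auto
qed

lemma pauli_coeff_diag_mat:
  "pauli_coeff n (diag_mat n f) s = (\<Sum>i<2 ^ n. f (index_point n i) * pauli_tensor n s i i) / 2 ^ n"
proof -
  have "(\<Sum>j<2 ^ n. pauli_tensor n s i j * diag_mat n f j i) = f (index_point n i) * pauli_tensor n s i i"
    if "i < 2 ^ n" for i
  proof -
    have "(\<Sum>j<2 ^ n. pauli_tensor n s i j * diag_mat n f j i)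
        = (\<Sum>j<2 ^ n. if j = i then f (index_point n i) * pauli_tensor n s i i else 0)"
      by (intro sum.cong) (auto simp: diag_mat_def)
    then show ?thesis using that by simp
  qed
  then show ?thesis
    unfolding pauli_coeff_def by simp
qed

lemma pauli_coeff_diag_mat_z_pauli:
  assumes "S \<subseteq> {..<n}"
  shows "pauli_coeff n (diag_mat n f) (z_pauli n S) = fourier n f S"
  unfolding pauli_coeff_diag_mat pauli_tensor_z_pauli_diag[OF assms] fourier_def
  using sum.reindex_bij_betw[OF bij_betw_index_point, of "\<lambda>x. f x * chi S x" n] by simp

lemma pauli_coeff_diag_mat_eq_0:
  "s \<in> pauli_idx n \<Longrightarrow> s \<notin> z_pauli n ` Pow {..<n} \<Longrightarrow> pauli_coeff n (diag_mat n f) s = 0"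
  unfolding pauli_coeff_diag_mat by (simp add: pauli_tensor_diag_eq_0)

lemma qbr_sum_diag_mat: "qbr_sum n (diag_mat n f) r = br_sum n f r"
proof -
  have "qbr_sum n (diag_mat n f) r
      = (\<Sum>s\<in>z_pauli n ` Pow {..<n}. cmod (pauli_coeff n (diag_mat n f) s) * r ^ weight n s)"
    unfolding qbr_sum_def
    by (rule sum.mono_neutral_right) (auto simp: z_pauli_in_pauli_idx pauli_coeff_diag_mat_eq_0)
  also have "\<dots> = br_sum n f r"
    unfolding br_sum_def sum.reindex[OF inj_on_z_pauli]
    by (intro sum.cong) (auto simp: pauli_coeff_diag_mat_z_pauli weight_z_pauli)
  finally show ?thesis .
qed

lemma has_qBr_diag_mat: "has_qBr n (diag_mat n f) \<longleftrightarrow> has_Br n f"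
  unfolding has_qBr_def has_Br_def qbr_sum_diag_mat opnorm_diag_mat ..

lemma qBr_diag_mat: "qBr n (diag_mat n f) = Br n f"
  unfolding qBr_def Br_def qbr_sum_diag_mat opnorm_diag_mat ..

lemma diag_mat_in_quantum_class:
  assumes "f \<in> classical_class n K"
  shows "diag_mat n f \<in> quantum_class n K"
proof (rule quantum_class_if_coeffs_above[OF _ assms])
  fix s assume s: "s \<in> pauli_idx n" "pauli_coeff n (diag_mat n f) s \<noteq> 0"
  then obtain S where "S \<in> Pow {..<n}" "s = z_pauli n S"
    using pauli_coeff_diag_mat_eq_0 by blast
  then show "\<exists>S\<in>Pow {..<n}. card S = weight n s \<and> fourier n f S \<noteq> 0"
    using s(2) by (auto simp: pauli_coeff_diag_mat_z_pauli weight_z_pauli)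
qed

section \<open>Lifting n qubits to 3n bits\<close>

text \<open>For \<open>y = \<plusminus>1\<close>, the unit eigenvector of \<open>\<sigma>\<^sub>\<tau>\<close> (\<open>\<tau> = 1, 2, 3\<close>) for the eigenvalue \<open>y\<close>,
  as a function of the basis index \<open>\<beta> \<in> {0, 1}\<close>.\<close>
definition pauli_eigvec :: "nat \<Rightarrow> real \<Rightarrow> nat \<Rightarrow> complex" where
  "pauli_eigvec \<tau> y \<beta> =
     (if \<tau> = 3 then complex_of_real (if \<beta> = 0 then (1 + y) / 2 else (1 - y) / 2)
      else complex_of_real (sqrt 2 / 2) *
        (if \<beta> = 0 then 1 else if \<tau> = 1 then complex_of_real y else \<i> * complex_of_real y))"

lemma sum_atLeast0_atMost_3: "(\<Sum>t\<in>{0..3::nat}. F t) = F 0 + F 1 + F 2 + F 3"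
  by (simp add: numeral_3_eq_3 numeral_2_eq_2 atLeast0_atMost_Suc add_ac)

lemma sum_atLeast1_atMost_3: "(\<Sum>t\<in>{1..3::nat}. F t) = F 1 + F 2 + F 3"
proof -
  have "{1..3::nat} = {1, 2, 3}" by auto
  then show ?thesis by (simp add: add_ac)
qed

text \<open>The one-site identity behind the lift: each \<open>(I + y\<^sub>\<tau> \<sigma>\<^sub>\<tau>) / 2\<close> is the projection onto the
  eigenvector above, so \<open>I + (y\<^sub>1 \<sigma>\<^sub>1 + y\<^sub>2 \<sigma>\<^sub>2 + y\<^sub>3 \<sigma>\<^sub>3) / 3\<close> is \<open>2/3\<close> times a sum of three
  rank-one projections.\<close>
lemma pauli_sum_eq_eigenprojections:
  assumes "\<alpha> \<in> {0, 1}" "\<beta> \<in> {0, 1}" "y 1 \<in> {-1, 1}" "y 2 \<in> {-1, 1}" "y 3 \<in> {-1, 1}"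
  shows "(\<Sum>t\<in>{0..3}. pauli t \<alpha> \<beta> * (if t = 0 then 1 else complex_of_real (y t) / 3))
       = 2 / 3 * (\<Sum>\<tau>\<in>{1..3}. pauli_eigvec \<tau> (y \<tau>) \<alpha> * cnj (pauli_eigvec \<tau> (y \<tau>) \<beta>))"
proof -
  have h: "complex_of_real (sqrt 2 / 2) * complex_of_real (sqrt 2 / 2) = 1 / 2"
    by (simp flip: of_real_mult)
  show ?thesis
    unfolding sum_atLeast0_atMost_3 sum_atLeast1_atMost_3 pauli_eigvec_def
    using assms by (auto simp: algebra_simps h) (simp_all add: complex_eq_iff)
qed

lemma norm_pauli_eigvec:
  assumes "\<tau> \<in> {1, 2, 3}" "y \<in> {-1, 1}"
  shows "(cmod (pauli_eigvec \<tau> y 0))\<^sup>2 + (cmod (pauli_eigvec \<tau> y 1))\<^sup>2 = 1"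
proof -
  have "(cmod (complex_of_real (sqrt 2 / 2)))\<^sup>2 = 1 / 2"
    by (simp add: power_divide)
  then show ?thesis
    using assms by (auto simp: pauli_eigvec_def norm_mult power_mult_distrib)
qed

definition lift_site :: "(nat \<Rightarrow> nat) \<Rightarrow> nat \<Rightarrow> nat" where
  "lift_site s k = 3 * k + s k - 1"

definition lift_set :: "nat \<Rightarrow> (nat \<Rightarrow> nat) \<Rightarrow> nat set" where
  "lift_set n s = lift_site s ` {k \<in> {..<n}. s k \<noteq> 0}"

definition pauli_lift :: "nat \<Rightarrow> cmat \<Rightarrow> (nat \<Rightarrow> real) \<Rightarrow> complex" where
  "pauli_lift n A x = (\<Sum>s\<in>pauli_idx n. pauli_coeff n A s / 3 ^ weight n s * chi (lift_set n s) x)"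

lemma lift_site_div: "s k \<in> {1, 2, 3} \<Longrightarrow> lift_site s k div 3 = k"
  unfolding lift_site_def by auto

lemma lift_site_mod: "s k \<in> {1, 2, 3} \<Longrightarrow> lift_site s k mod 3 = s k - 1"
  unfolding lift_site_def by auto presburger+

lemma inj_on_lift_site: "s \<in> pauli_idx n \<Longrightarrow> inj_on (lift_site s) {k \<in> {..<n}. s k \<noteq> 0}"
  by (rule inj_onI) (metis (mono_tags, lifting) lift_site_div lessThan_iff mem_Collect_eq pauli_idx_nonzero_cases)

lemma lift_set_subset: "s \<in> pauli_idx n \<Longrightarrow> lift_set n s \<subseteq> {..<3 * n}"
  unfolding lift_set_def lift_site_def using pauli_idx_nonzero_cases by fastforce

lemma card_lift_set: "s \<in> pauli_idx n \<Longrightarrow> card (lift_set n s) = weight n s"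
  unfolding lift_set_def weight_def by (rule card_image[OF inj_on_lift_site])

lemma inj_on_lift_set: "inj_on (lift_set n) (pauli_idx n)"
proof (rule inj_onI)
  have agree: "s k = s' k"
    if s: "s \<in> pauli_idx n" "s' \<in> pauli_idx n" "lift_set n s = lift_set n s'" "k < n" "s k \<noteq> 0"
    for s s' k
  proof -
    have "lift_site s k \<in> lift_set n s'"
      using s unfolding lift_set_def by blast
    then obtain k' where k': "k' < n" "s' k' \<noteq> 0" "lift_site s k = lift_site s' k'"
      unfolding lift_set_def by auto
    have sk: "s k \<in> {1, 2, 3}" "s' k' \<in> {1, 2, 3}"
      using s k' pauli_idx_nonzero_cases by blast+
    then have "k = k'"
      using k'(3) lift_site_div by metis
    then show ?thesis
      using k'(3) sk lift_site_mod[of s k] lift_site_mod[of s' k'] by auto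
  qed
  fix s s' assume s: "s \<in> pauli_idx n" "s' \<in> pauli_idx n" "lift_set n s = lift_set n s'"
  have "s k = s' k" if "k < n" for k
    using agree[OF s that] agree[OF s(2,1) s(3)[symmetric] that] by fastforce
  moreover have "s \<in> extensional {..<n}" "s' \<in> extensional {..<n}"
    using s(1,2) by (simp_all add: pauli_idx_def PiE_def)
  ultimately show "s = s'"
    by (intro extensionalityI[of _ "{..<n}"]) auto
qed

lemma fourier_pauli_lift:
  "T \<subseteq> {..<3 * n} \<Longrightarrow> fourier (3 * n) (pauli_lift n A) T =
     (\<Sum>s\<in>pauli_idx n. if lift_set n s = T then pauli_coeff n A s / 3 ^ weight n s else 0)"
  unfolding pauli_lift_def by (rule fourier_sum_chi) (auto simp: lift_set_subset)

lemma fourier_pauli_lift_lift_set: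
  assumes "s \<in> pauli_idx n"
  shows "fourier (3 * n) (pauli_lift n A) (lift_set n s) = pauli_coeff n A s / 3 ^ weight n s"
proof -
  have "fourier (3 * n) (pauli_lift n A) (lift_set n s) =
      (\<Sum>s'\<in>pauli_idx n. if s' = s then pauli_coeff n A s' / 3 ^ weight n s' else 0)"
    unfolding fourier_pauli_lift[OF lift_set_subset[OF assms]]
    using assms inj_on_lift_set[of n] by (intro sum.cong) (auto dest: inj_onD)
  then show ?thesis using assms by simp
qed

lemma fourier_pauli_lift_eq_0:
  "T \<subseteq> {..<3 * n} \<Longrightarrow> T \<notin> lift_set n ` pauli_idx n \<Longrightarrow> fourier (3 * n) (pauli_lift n A) T = 0"
  by (subst fourier_pauli_lift) (auto intro!: sum.neutral)

lemma br_sum_pauli_lift: "br_sum (3 * n) (pauli_lift n A) r = qbr_sum n A (r / 3)"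
proof -
  have "br_sum (3 * n) (pauli_lift n A) r
      = (\<Sum>T\<in>lift_set n ` pauli_idx n. cmod (fourier (3 * n) (pauli_lift n A) T) * r ^ card T)"
    unfolding br_sum_def
  proof (rule sum.mono_neutral_right)
    show "lift_set n ` pauli_idx n \<subseteq> Pow {..<3 * n}"
      using lift_set_subset by blast
  qed (auto simp: fourier_pauli_lift_eq_0)
  also have "\<dots> = qbr_sum n A (r / 3)"
    unfolding qbr_sum_def sum.reindex[OF inj_on_lift_set]
    by (intro sum.cong) (simp_all add: fourier_pauli_lift_lift_set card_lift_set norm_divide
        norm_power power_divide)
  finally show ?thesis .
qed

lemma pauli_lift_in_classical_class:
  assumes "A \<in> quantum_class n K"
  shows "pauli_lift n A \<in> classical_class (3 * n) K"
proof (rule classical_class_if_coeffs_above[OF _ assms])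
  fix T assume T: "T \<in> Pow {..<3 * n}" "fourier (3 * n) (pauli_lift n A) T \<noteq> 0"
  then obtain s where "s \<in> pauli_idx n" "T = lift_set n s"
    using fourier_pauli_lift_eq_0 by blast
  then show "\<exists>s\<in>pauli_idx n. weight n s = card T \<and> pauli_coeff n A s \<noteq> 0"
    using T(2) by (auto simp: fourier_pauli_lift_lift_set card_lift_set)
qed

text \<open>At a point \<open>x\<close> of \<open>{-1,1}\<^sup>3\<^sup>n\<close>, site \<open>k\<close> reads off \<open>y\<^sub>\<tau> = x\<^sub>3\<^sub>k\<^sub>+\<^sub>\<tau>\<^sub>-\<^sub>1\<close>; \<open>lift_coeff x k\<close> holds the
  Pauli coefficients of \<open>I + (y\<^sub>1 \<sigma>\<^sub>1 + y\<^sub>2 \<sigma>\<^sub>2 + y\<^sub>3 \<sigma>\<^sub>3) / 3\<close>.\<close>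
definition lift_coeff :: "(nat \<Rightarrow> real) \<Rightarrow> nat \<Rightarrow> nat \<Rightarrow> complex" where
  "lift_coeff x k t = (if t = 0 then 1 else complex_of_real (x (3 * k + t - 1)) / 3)"

definition product_state :: "nat \<Rightarrow> (nat \<Rightarrow> real) \<Rightarrow> (nat \<Rightarrow> nat) \<Rightarrow> nat \<Rightarrow> complex" where
  "product_state n x u i = (\<Prod>k<n. pauli_eigvec (u k) (x (3 * k + u k - 1)) (bitk n k i))"

lemma chi_lift_set_div:
  assumes "s \<in> pauli_idx n"
  shows "chi (lift_set n s) x / 3 ^ weight n s = (\<Prod>k<n. lift_coeff x k (s k))"
proof -
  define K where "K = {k \<in> {..<n}. s k \<noteq> 0}"
  have "(\<Prod>k<n. lift_coeff x k (s k)) = (\<Prod>k\<in>K. lift_coeff x k (s k))"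
    by (rule prod.mono_neutral_right) (auto simp: K_def lift_coeff_def)
  also have "\<dots> = (\<Prod>k\<in>K. complex_of_real (x (lift_site s k))) / 3 ^ card K"
    by (simp add: K_def lift_coeff_def lift_site_def prod_dividef)
  also have "(\<Prod>k\<in>K. complex_of_real (x (lift_site s k))) = chi (lift_set n s) x"
    unfolding chi_def lift_set_def K_def[symmetric] of_real_prod
    using prod.reindex[OF inj_on_lift_site[OF assms], of "\<lambda>i. complex_of_real (x i)"]
    by (simp add: K_def)
  finally show ?thesis
    by (simp add: K_def weight_def)
qed

lemma pauli_lift_eq_trace:
  "pauli_lift n A x = (\<Sum>i<2 ^ n. \<Sum>j<2 ^ n.
      A j i * (\<Sum>s\<in>pauli_idx n. pauli_tensor n s i j * (\<Prod>k<n. lift_coeff x k (s k)))) / 2 ^ n"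
proof -
  have "pauli_lift n A x = (\<Sum>s\<in>pauli_idx n. pauli_coeff n A s * (\<Prod>k<n. lift_coeff x k (s k)))"
    unfolding pauli_lift_def
    by (intro sum.cong refl) (simp flip: chi_lift_set_div)
  then show ?thesis
    by (simp only: sum_pauli_coeff_mult)
qed

lemma cube_lift_coord:
  assumes "x \<in> cube (3 * n)" "k < n" "\<tau> \<in> {1, 2, 3}"
  shows "x (3 * k + \<tau> - 1) \<in> {-1, 1}"
proof -
  have "3 * k + \<tau> - 1 < 3 * n"
    using assms(2,3) by auto
  then show ?thesis
    using cube_coord_cases[OF assms(1)] by blast
qed

lemma sum_pauli_tensor_lift_coeff:
  assumes "x \<in> cube (3 * n)"
  shows "(\<Sum>s\<in>pauli_idx n. pauli_tensor n s i j * (\<Prod>k<n. lift_coeff x k (s k)))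
       = (2 / 3) ^ n * (\<Sum>u\<in>{..<n} \<rightarrow>\<^sub>E {1..3}. product_state n x u i * cnj (product_state n x u j))"
proof -
  let ?v = "\<lambda>k \<tau>. pauli_eigvec \<tau> (x (3 * k + \<tau> - 1))"
  have "(\<Sum>s\<in>pauli_idx n. pauli_tensor n s i j * (\<Prod>k<n. lift_coeff x k (s k)))
      = (\<Prod>k<n. \<Sum>t\<in>{0..3}. pauli t (bitk n k i) (bitk n k j) * lift_coeff x k t)"
    by (rule sum_pauli_tensor_mult_prod)
  also have "\<dots> = (\<Prod>k<n. 2 / 3 * (\<Sum>\<tau>\<in>{1..3}. ?v k \<tau> (bitk n k i) * cnj (?v k \<tau> (bitk n k j))))"
  proof (intro prod.cong refl)
    fix k assume "k \<in> {..<n}"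
    then have y: "x (3 * k + \<tau> - 1) \<in> {-1, 1}" if "\<tau> \<in> {1, 2, 3}" for \<tau>
      using cube_lift_coord[OF assms _ that] by simp
    have b: "bitk n k i \<in> {0, 1}" "bitk n k j \<in> {0, 1}"
      using bitk_less_2 by (auto simp: less_2_cases_iff)
    show "(\<Sum>t\<in>{0..3}. pauli t (bitk n k i) (bitk n k j) * lift_coeff x k t)
        = 2 / 3 * (\<Sum>\<tau>\<in>{1..3}. ?v k \<tau> (bitk n k i) * cnj (?v k \<tau> (bitk n k j)))"
      unfolding lift_coeff_def
      by (rule pauli_sum_eq_eigenprojections[where y = "\<lambda>\<tau>. x (3 * k + \<tau> - 1)", OF b y y y]) simp_all
  qed
  also have "\<dots> = (2 / 3) ^ n * (\<Prod>k<n. \<Sum>\<tau>\<in>{1..3}. ?v k \<tau> (bitk n k i) * cnj (?v k \<tau> (bitk n k j)))"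
    by (subst prod.distrib) simp
  also have "(\<Prod>k<n. \<Sum>\<tau>\<in>{1..3}. ?v k \<tau> (bitk n k i) * cnj (?v k \<tau> (bitk n k j)))
      = (\<Sum>u\<in>{..<n} \<rightarrow>\<^sub>E {1..3}. \<Prod>k<n. ?v k (u k) (bitk n k i) * cnj (?v k (u k) (bitk n k j)))"
    by (rule prod_sum_PiE) auto
  also have "\<dots> = (\<Sum>u\<in>{..<n} \<rightarrow>\<^sub>E {1..3}. product_state n x u i * cnj (product_state n x u j))"
    by (simp add: product_state_def prod.distrib cnj_prod)
  finally show ?thesis .
qed

lemma trace_mult_sum_outer:
  fixes A :: cmat
  shows "(\<Sum>i\<in>I. \<Sum>j\<in>I. A j i * (\<Sum>u\<in>U. p u i * cnj (p u j)))
       = (\<Sum>u\<in>U. \<Sum>j\<in>I. cnj (p u j) * (\<Sum>i\<in>I. A j i * p u i))"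
proof -
  have "(\<Sum>i\<in>I. \<Sum>j\<in>I. A j i * (\<Sum>u\<in>U. p u i * cnj (p u j)))
      = (\<Sum>i\<in>I. \<Sum>j\<in>I. \<Sum>u\<in>U. cnj (p u j) * (A j i * p u i))"
    by (simp add: sum_distrib_left algebra_simps)
  also have "\<dots> = (\<Sum>u\<in>U. \<Sum>j\<in>I. \<Sum>i\<in>I. cnj (p u j) * (A j i * p u i))"
    by (subst sum.swap) (simp add: sum.swap[of _ U])
  finally show ?thesis
    by (simp add: sum_distrib_left)
qed

lemma pauli_lift_eq_mean_expectation:
  assumes "x \<in> cube (3 * n)"
  shows "pauli_lift n A x = (\<Sum>u\<in>{..<n} \<rightarrow>\<^sub>E {1..3}. \<Sum>j<2 ^ n.
      cnj (product_state n x u j) * (\<Sum>i<2 ^ n. A j i * product_state n x u i)) / 3 ^ n"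
proof -
  have "pauli_lift n A x = (2 / 3) ^ n * (\<Sum>i<2 ^ n. \<Sum>j<2 ^ n.
      A j i * (\<Sum>u\<in>{..<n} \<rightarrow>\<^sub>E {1..3}. product_state n x u i * cnj (product_state n x u j))) / 2 ^ n"
    unfolding pauli_lift_eq_trace sum_pauli_tensor_lift_coeff[OF assms]
    by (simp add: sum_distrib_left algebra_simps)
  then show ?thesis
    by (simp add: trace_mult_sum_outer power_divide)
qed

lemma vnorm_product_state:
  assumes "x \<in> cube (3 * n)" "u \<in> {..<n} \<rightarrow>\<^sub>E {1..3}"
  shows "vnorm (2 ^ n) (product_state n x u) = 1"
proof -
  have "(\<Sum>i<2 ^ n. (cmod (product_state n x u i))\<^sup>2)
      = (\<Sum>i<2 ^ n. \<Prod>k<n. (cmod (pauli_eigvec (u k) (x (3 * k + u k - 1)) (bitk n k i)))\<^sup>2)"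
    by (simp add: product_state_def prod_power_distrib flip: prod_norm)
  also have "\<dots> = (\<Prod>k<n. (cmod (pauli_eigvec (u k) (x (3 * k + u k - 1)) 0))\<^sup>2
      + (cmod (pauli_eigvec (u k) (x (3 * k + u k - 1)) 1))\<^sup>2)"
    by (rule sum_index_prod_bits)
  also have "\<dots> = 1"
  proof (rule prod.neutral, intro ballI)
    fix k assume k: "k \<in> {..<n}"
    then have "u k \<in> {1..3}"
      using assms(2) by blast
    then have "u k \<in> {1, 2, 3}"
      by auto
    then show "(cmod (pauli_eigvec (u k) (x (3 * k + u k - 1)) 0))\<^sup>2
        + (cmod (pauli_eigvec (u k) (x (3 * k + u k - 1)) 1))\<^sup>2 = 1"
      using k cube_lift_coord[OF assms(1)] by (intro norm_pauli_eigvec) auto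
  qed
  finally show ?thesis
    by (simp add: vnorm_def)
qed

lemma supnorm_pauli_lift_le: "supnorm (3 * n) (pauli_lift n A) \<le> opnorm n A"
proof (unfold supnorm_le_iff, intro ballI)
  fix x assume x: "x \<in> cube (3 * n)"
  let ?U = "{..<n} \<rightarrow>\<^sub>E {1..3::nat}"
  have "cmod (pauli_lift n A x) \<le> (\<Sum>u\<in>?U. cmod (\<Sum>j<2 ^ n.
      cnj (product_state n x u j) * (\<Sum>i<2 ^ n. A j i * product_state n x u i))) / 3 ^ n"
    unfolding pauli_lift_eq_mean_expectation[OF x] norm_divide norm_power norm_numeral
    by (intro divide_right_mono norm_sum) simp
  also have "\<dots> \<le> (\<Sum>u\<in>?U. opnorm n A) / 3 ^ n"
    by (intro divide_right_mono sum_mono norm_quadratic_form_le_opnorm vnorm_product_state[OF x]) auto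
  also have "\<dots> = opnorm n A"
    by (simp add: card_PiE)
  finally show "cmod (pauli_lift n A x) \<le> opnorm n A" .
qed

lemma has_Br_pauli_lift_and_Br_le:
  assumes "has_qBr n A"
  shows "has_Br (3 * n) (pauli_lift n A) \<and> Br (3 * n) (pauli_lift n A) \<le> 3 * qBr n A"
proof -
  obtain s where s: "s \<in> pauli_idx n" "weight n s > 0" "pauli_coeff n A s \<noteq> 0"
    using has_qBr_imp_nonscalar[OF assms] by blast
  show ?thesis
  proof (rule has_Br_and_Br_le)
    show "lift_set n s \<subseteq> {..<3 * n}" "lift_set n s \<noteq> {}"
      using s lift_set_subset card_lift_set by fastforce+
    show "fourier (3 * n) (pauli_lift n A) (lift_set n s) \<noteq> 0"
      using s by (simp add: fourier_pauli_lift_lift_set)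
    show "3 * qBr n A > 0"
      using has_qBrD(1)[OF assms] by simp
    show "supnorm (3 * n) (pauli_lift n A) \<le> br_sum (3 * n) (pauli_lift n A) (3 * qBr n A)"
      using supnorm_pauli_lift_le has_qBrD(2)[OF assms] by (simp add: br_sum_pauli_lift)
  qed
qed

lemma Inf_image_le_scaled_Inf_image:
  fixes f :: "'a \<Rightarrow> real" and g :: "'b \<Rightarrow> real"
  assumes "X \<noteq> {}" "bdd_below (f ` Y)" "c > 0"
    and "\<And>x. x \<in> X \<Longrightarrow> \<phi> x \<in> Y \<and> f (\<phi> x) \<le> c * g x"
  shows "Inf (f ` Y) \<le> c * Inf (g ` X)"
proof -
  have "Inf (f ` Y) / c \<le> g x" if "x \<in> X" for x
  proof -
    have "Inf (f ` Y) \<le> f (\<phi> x)"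
      using assms(2,4) that by (intro cInf_lower) auto
    then show ?thesis
      using assms(3,4) that by (fastforce simp: divide_le_eq mult.commute)
  qed
  then have "Inf (f ` Y) / c \<le> Inf (g ` X)"
    using assms(1) by (intro cInf_greatest) auto
  then show ?thesis
    using assms(3) by (simp add: divide_le_eq mult.commute)
qed

theorem theorem4p4:
  fixes n d :: nat
  assumes "1 \<le> d" and "d \<le> n"
  shows "\<forall>K \<in> {All, Hom, HomEq d, DegLe d}.
           qBr_class n (quantum_class n K) \<le> Br_class n (classical_class n K) \<and>
           Br_class (3 * n) (classical_class (3 * n) K) \<le> 3 * qBr_class n (quantum_class n K)"
proof
  fix K assume K: "K \<in> {All, Hom, HomEq d, DegLe d}"
  define C where "C m = {f \<in> classical_class m K. has_Br m f}" for m
  define Q where "Q = {A \<in> quantum_class n K. has_qBr n A}"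
  txt \<open>The hypotheses on \<open>d\<close> only serve to make both index sets nonempty, which the infima
    need in order to be meaningful.\<close>
  have "{..<d} \<subseteq> {..<n}" "{..<d} \<noteq> {}"
    using assms by (auto simp: lessThan_empty_iff)
  then have f0: "chi {..<d} \<in> C n"
    unfolding C_def using K by (simp add: has_Br_chi chi_in_classical_class)
  then have A0: "diag_mat n (chi {..<d}) \<in> Q"
    unfolding C_def Q_def by (simp add: diag_mat_in_quantum_class has_qBr_diag_mat)
  have "Inf (qBr n ` Q) \<le> 1 * Inf (Br n ` C n)"
    using f0 by (intro Inf_image_le_scaled_Inf_image[where \<phi> = "diag_mat n"] bdd_belowI[of _ 0])
      (auto simp: C_def Q_def diag_mat_in_quantum_class has_qBr_diag_mat qBr_diag_mat
        dest: has_qBrD(1))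
  moreover have "Inf (Br (3 * n) ` C (3 * n)) \<le> 3 * Inf (qBr n ` Q)"
    using A0 by (intro Inf_image_le_scaled_Inf_image[where \<phi> = "pauli_lift n"] bdd_belowI[of _ 0])
      (auto simp: C_def Q_def pauli_lift_in_classical_class has_Br_pauli_lift_and_Br_le dest: Br_pos)
  ultimately show "qBr_class n (quantum_class n K) \<le> Br_class n (classical_class n K) \<and>
      Br_class (3 * n) (classical_class (3 * n) K) \<le> 3 * qBr_class n (quantum_class n K)"
    by (simp add: qBr_class_def Br_class_def C_def Q_def)
qed

end
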